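(* Let $\mathcal A=(\Sigma,Q^\mathcal A,q^\mathcal A_0,\Omega^\mathcal A,\Delta^\mathcal A)$ and $\mathcal B=(\Sigma,Q^\mathcal B,q^\mathcal B_0,\Omega^\mathcal B,\Delta^\mathcal B)$ be nondeterministic parity tree automata with $L(\mathcal A)\cap L(\mathcal B)=\emptyset$. Then there is a function $\mathcal P:\bigcup_{a\in\Sigma}\Delta^\mathcal A(a)\times\Delta^\mathcal B(a)\to\{\mathsf L,\mathsf R\}$ such that Pathfinder wins every play of the disjointness game $G_\cap(\mathcal A,\mathcal B)$ in which she always plays $d_i:=\mathcal P(\delta^\mathcal A_i,\delta^\mathcal B_i)$.
   Context: Trees are maps $t:\{\mathsf L,\mathsf R\}^*\to\Sigma$. A nondeterministic parity tree automaton $(\Sigma,Q,q_0,\Omega,\Delta)$ has $\Omega:Q\to\mathbb N$ and $\Delta\subseteq Q\times\Sigma\times Q\times Q$; a run on $t$ is $\rho$ with $\rho(\epsilon)=q_0$ and $(\rho(u),t(u),\rho(u\mathsf L),\rho(u\mathsf R))\in\Delta$, accepting if on every branch the maximal priority seen infinitely often is even; $L(\cdot)$ denotes the recognised language. The priority of a transition $(q,a,q_\mathsf L,q_\mathsf R)$ is $\Omega(q)$, and an infinite sequence of transitions is accepting if the maximal priority occurring infinitely often is even. $\Delta(a)$ is the set of transitions over letter $a$, and $\Delta(q,a)$ those from state $q$ over $a$. All states of the automata are assumed productive ($L(\mathcal A_q)\neq\emptyset$ for each state $q$, where $\mathcal A_q$ has initial state $q$). Disjointness game $G_\cap(\mathcal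 A,\mathcal B)$: positions are pairs $(q^\mathcal A_i,q^\mathcal B_i)$, starting at $(q_0^\mathcal A,q_0^\mathcal B)$. In round $i$, player Automaton chooses a letter $a_i\in\Sigma$, a transition $\delta^\mathcal A_i=(q^\mathcal A_i,a_i,q^\mathcal A_{\mathsf L,i},q^\mathcal A_{\mathsf R,i})\in\Delta^\mathcal A(q^\mathcal A_i,a_i)$ and a transition $\delta^\mathcal B_i=(q^\mathcal B_i,a_i,q^\mathcal B_{\mathsf L,i},q^\mathcal B_{\mathsf R,i})\in\Delta^\mathcal B(q^\mathcal B_i,a_i)$; then player Pathfinder chooses $d_i\in\{\mathsf L,\mathsf R\}$; the next position is $(q^\mathcal A_{d_i,i},q^\mathcal B_{d_i,i})$. Automaton wins an infinite play iff both sequences $\delta^\mathcal A_0\delta^\mathcal A_1\cdots$ and $\delta^\mathcal B_0\delta^\mathcal B_1\cdots$ are accepting; otherwise Pathfinder wins. *)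

theory Defs
  imports Main
begin

datatype dir = L | R

type_synonym 'a tree = "dir list \<Rightarrow> 'a"

text \<open>A transition (q, a, q_L, q_R).\<close>
type_synonym ('q,'a) trans = "'q \<times> 'a \<times> 'q \<times> 'q"

record ('q,'a) npta =
  states :: "'q set"
  init :: 'q
  pri :: "'q \<Rightarrow> nat"
  delta :: "('q,'a) trans set"

definition tr_src :: "('q,'a) trans \<Rightarrow> 'q" where
  "tr_src \<delta> = fst \<delta>"

definition tr_letter :: "('q,'a) trans \<Rightarrow> 'a" where
  "tr_letter \<delta> = fst (snd \<delta>)"

definition tr_succ :: "('q,'a) trans \<Rightarrow> dir \<Rightarrow> 'q" where
  "tr_succ \<delta> d = (case d of L \<Rightarrow> fst (snd (snd \<delta>)) | R \<Rightarrow> snd (snd (snd \<delta>)))"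

definition parity_acc :: "(nat \<Rightarrow> nat) \<Rightarrow> bool" where
  "parity_acc p \<longleftrightarrow> (\<exists>m. even m \<and> (\<exists>\<^sub>\<infinity>n. p n = m) \<and> (\<forall>\<^sub>\<infinity>n. p n \<le> m))"

definition is_npta :: "'a set \<Rightarrow> ('q,'a) npta \<Rightarrow> bool" where
  "is_npta \<Sigma> A \<longleftrightarrow> finite \<Sigma> \<and> finite (states A) \<and> init A \<in> states A \<and>
     delta A \<subseteq> states A \<times> \<Sigma> \<times> states A \<times> states A"

definition is_run :: "('q,'a) npta \<Rightarrow> 'q \<Rightarrow> 'a tree \<Rightarrow> 'q tree \<Rightarrow> bool" where
  "is_run A q t \<rho> \<longleftrightarrow> \<rho> [] = q \<and>
     (\<forall>u. (\<rho> u, t u, \<rho> (u @ [L]), \<rho> (u @ [R])) \<in> delta A)"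

definition branch_prefix :: "(nat \<Rightarrow> dir) \<Rightarrow> nat \<Rightarrow> dir list" where
  "branch_prefix \<pi> n = map \<pi> [0..<n]"

definition accepting_run :: "('q,'a) npta \<Rightarrow> 'q tree \<Rightarrow> bool" where
  "accepting_run A \<rho> \<longleftrightarrow>
     (\<forall>\<pi>. parity_acc (\<lambda>n. pri A (\<rho> (branch_prefix \<pi> n))))"

definition lang_from :: "'a set \<Rightarrow> ('q,'a) npta \<Rightarrow> 'q \<Rightarrow> 'a tree set" where
  "lang_from \<Sigma> A q = {t. (\<forall>u. t u \<in> \<Sigma>) \<and> (\<exists>\<rho>. is_run A q t \<rho> \<and> accepting_run A \<rho>)}"

definition lang :: "'a set \<Rightarrow> ('q,'a) npta \<Rightarrow> 'a tree set" where
  "lang \<Sigma> A = lang_from \<Sigma> A (init A)"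

definition productive :: "'a set \<Rightarrow> ('q,'a) npta \<Rightarrow> bool" where
  "productive \<Sigma> A \<longleftrightarrow> (\<forall>q \<in> states A. lang_from \<Sigma> A q \<noteq> {})"

definition trans_seq_acc :: "('q,'a) npta \<Rightarrow> (nat \<Rightarrow> ('q,'a) trans) \<Rightarrow> bool" where
  "trans_seq_acc A \<delta>s \<longleftrightarrow> parity_acc (\<lambda>i. pri A (tr_src (\<delta>s i)))"

text \<open>An infinite play of the disjointness game G_cap(A,B): in round i Automaton picks
  a letter a_i in Sigma and transitions dA i, dB i over a_i from the current states,
  Pathfinder picks d i, and the next position is the pair of d i-successors.\<close>
definition is_play :: "'a set \<Rightarrow> ('p,'a) npta \<Rightarrow> ('q,'a) npta \<Rightarrow>
    (nat \<Rightarrow> ('p,'a) trans) \<Rightarrow> (nat \<Rightarrow> ('q,'a) trans) \<Rightarrow> (nat \<Rightarrow> dir) \<Rightarrow> bool" where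
  "is_play \<Sigma> A B dA dB d \<longleftrightarrow>
     tr_src (dA 0) = init A \<and> tr_src (dB 0) = init B \<and>
     (\<forall>i. dA i \<in> delta A \<and> dB i \<in> delta B \<and>
          tr_letter (dA i) \<in> \<Sigma> \<and> tr_letter (dA i) = tr_letter (dB i) \<and>
          tr_src (dA (Suc i)) = tr_succ (dA i) (d i) \<and>
          tr_src (dB (Suc i)) = tr_succ (dB i) (d i))"

definition automaton_wins :: "('p,'a) npta \<Rightarrow> ('q,'a) npta \<Rightarrow>
    (nat \<Rightarrow> ('p,'a) trans) \<Rightarrow> (nat \<Rightarrow> ('q,'a) trans) \<Rightarrow> bool" where
  "automaton_wins A B dA dB \<longleftrightarrow> trans_seq_acc A dA \<and> trans_seq_acc B dB"

end

theory Submission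
  imports Defs "HOL-Library.Infinite_Set"
begin

(* Call a labelling of the binary tree by joint moves (pairs of transitions of A and B over a
   common letter) winning against C, where C x is the set of directions Pathfinder may take after
   the move x, if it is consistent along the paths allowed by C and accepted by both automata
   along every branch allowed by C. By induction on the number of joint moves at which C allows
   both directions, Pathfinder can shrink C to a single direction per move without creating new
   winning positions for Automaton. Take such a move x0. If some tree winning against the
   restriction of C to R at x0 has its root labelled x0, then every tree winning against the
   restriction to L can be merged with it, switching between the two trees at every node labelled
   x0 according to the direction taken; each branch of the merged tree interleaves branches of the
   two trees, and interleaving preserves the parity condition. Otherwise the trees winning against
   the restriction to R never reach x0 and thus win against C itself.
   For the unrestricted game this yields P: a play won by Automaton against P is a tree winning
   against P, so some tree wins against every Pathfinder, and its letters form a tree accepted by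
   both automata. *)

section \<open>Interleaving parity sequences\<close>

lemma parity_acc_iff:
  "parity_acc p \<longleftrightarrow> (\<exists>m. even m \<and> infinite {n. p n = m} \<and> finite {n. \<not> p n \<le> m})"
  unfolding parity_acc_def INFM_iff_infinite MOST_iff_cofinite by simp

lemma parity_acc_shift:
  assumes "parity_acc p"
  shows "parity_acc (\<lambda>n. p (n + k))"
proof -
  obtain m where m: "even m" "infinite {n. p n = m}" "finite {n. \<not> p n \<le> m}"
    using assms parity_acc_iff by blast
  have "{n. \<not> p (n + k) \<le> m} = (\<lambda>n. n + k) -` {n. \<not> p n \<le> m}" by auto
  then have "finite {n. \<not> p (n + k) \<le> m}"
    using finite_vimageI[OF m(3), of "\<lambda>n. n + k"] by (simp add: inj_def)
  moreover have "{n. p n = m} \<subseteq> {..<k} \<union> (\<lambda>n. n + k) ` {n. p (n + k) = m}"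
  proof
    fix n assume "n \<in> {n. p n = m}"
    then show "n \<in> {..<k} \<union> (\<lambda>n. n + k) ` {n. p (n + k) = m}"
      by (cases "n < k") (auto intro!: image_eqI[of _ _ "n - k"])
  qed
  then have "infinite {n. p (n + k) = m}"
    using m(2) by (meson finite_Un finite_imageI finite_lessThan finite_subset)
  ultimately show ?thesis using m(1) parity_acc_iff by blast
qed

(* Position 0 is never counted: hits c n is the number of the first n steps j \<rightarrow> Suc j
   that land on c. *)
definition hits :: "(nat \<Rightarrow> bool) \<Rightarrow> nat \<Rightarrow> nat" where
  "hits c n = card {j. j < n \<and> c (Suc j)}"

lemma hits_0 [simp]: "hits c 0 = 0"
  by (simp add: hits_def)

lemma hits_Suc: "hits c (Suc n) = hits c n + (if c (Suc n) then 1 else 0)"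
proof -
  have "{j. j < Suc n \<and> c (Suc j)} = {j. j < n \<and> c (Suc j)} \<union> (if c (Suc n) then {n} else {})"
    using less_Suc_eq by auto
  then show ?thesis unfolding hits_def by (auto simp: card_insert_if)
qed

lemma hits_mono: "n \<le> m \<Longrightarrow> hits c n \<le> hits c m"
  by (induction m rule: dec_induct) (auto simp: hits_Suc)

lemma hits_strict_mono:
  assumes "c m" and "n < m"
  shows "hits c n < hits c m"
proof -
  obtain j where "m = Suc j" "n \<le> j" using assms(2) by (cases m) auto
  then show ?thesis using assms(1) hits_mono[of n j c] by (simp add: hits_Suc)
qed

lemma inj_on_hits: "inj_on (hits c) {n. c n}"
  by (rule inj_onI) (metis hits_strict_mono less_irrefl mem_Collect_eq nat_neq_iff)

lemma hits_unbounded: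
  assumes "infinite {j. c (Suc j)}"
  shows "\<exists>n. k \<le> hits c n"
proof (induction k)
  case (Suc k)
  then obtain n where n: "k \<le> hits c n" by auto
  from assms obtain j where "n \<le> j" "c (Suc j)"
    unfolding infinite_nat_iff_unbounded_le by auto
  then have "k < hits c (Suc j)" using n hits_mono[of n j c] by (simp add: hits_Suc)
  then show ?case by (auto simp: Suc_le_eq)
qed simp

lemma hits_surj:
  assumes "infinite {j. c (Suc j)}" and "k \<noteq> 0"
  shows "\<exists>n. c n \<and> hits c n = k"
proof -
  define n where "n = (LEAST n. k \<le> hits c n)"
  have n: "k \<le> hits c n"
    unfolding n_def using hits_unbounded[OF assms(1)] by (rule LeastI_ex)
  then obtain n' where n': "n = Suc n'" using assms(2) by (cases n) auto
  have "\<not> k \<le> hits c n'" using n' unfolding n_def by (metis lessI not_less_Least)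
  then show ?thesis using n n' by (auto simp: hits_Suc split: if_splits)
qed

(* Choosing m = 0 when c holds only finitely often ensures that, when two such sequences are
   interleaved, the larger of the two values belongs to a side visited infinitely often. *)
lemma parity_acc_on_hits:
  assumes "infinite {j. c (Suc j)} \<Longrightarrow> parity_acc q"
  shows "\<exists>m. even m \<and> finite {n. c n \<and> \<not> q (hits c n) \<le> m} \<and>
    (infinite {j. c (Suc j)} \<longrightarrow> infinite {n. c n \<and> q (hits c n) = m}) \<and>
    (finite {j. c (Suc j)} \<longrightarrow> m = 0)"
proof (cases "infinite {j. c (Suc j)}")
  case True
  then obtain m where m: "even m" "infinite {k. q k = m}" "finite {k. \<not> q k \<le> m}"
    using assms parity_acc_iff by blast
  have "{n. c n \<and> \<not> q (hits c n) \<le> m} = hits c -` {k. \<not> q k \<le> m} \<inter> {n. c n}" by auto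
  then have "finite {n. c n \<and> \<not> q (hits c n) \<le> m}"
    using finite_vimage_IntI[OF m(3) inj_on_hits] by simp
  moreover have "infinite {n. c n \<and> q (hits c n) = m}"
  proof
    assume "finite {n. c n \<and> q (hits c n) = m}"
    moreover have "{k. q k = m} \<subseteq> insert 0 (hits c ` {n. c n \<and> q (hits c n) = m})"
    proof
      fix k assume "k \<in> {k. q k = m}"
      then show "k \<in> insert 0 (hits c ` {n. c n \<and> q (hits c n) = m})"
        using hits_surj[OF True, of k] by (cases "k = 0") auto
    qed
    ultimately show False using m(2) by (meson finite_imageI finite_insert finite_subset)
  qed
  ultimately show ?thesis using m(1) True by blast
next
  case False
  have "{n. c n} \<subseteq> insert 0 (Suc ` {j. c (Suc j)})"
    by (auto simp: image_iff) (metis not0_implies_Suc)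
  then have "finite {n. c n}"
    using False by (meson finite_imageI finite_insert finite_subset)
  then have "finite {n. c n \<and> \<not> q (hits c n) \<le> 0}"
    by (rule rev_finite_subset) blast
  then show ?thesis using False by auto
qed

lemma parity_acc_interleave:
  fixes c :: "nat \<Rightarrow> bool" and g q\<^sub>1 q\<^sub>2 :: "nat \<Rightarrow> nat"
  assumes g: "\<And>n. g n = (if c n then q\<^sub>1 (hits c n) else q\<^sub>2 (hits (\<lambda>n. \<not> c n) n))"
    and acc\<^sub>1: "infinite {j. c (Suc j)} \<Longrightarrow> parity_acc q\<^sub>1"
    and acc\<^sub>2: "infinite {j. \<not> c (Suc j)} \<Longrightarrow> parity_acc q\<^sub>2"
  shows "parity_acc g"
proof -
  let ?c' = "\<lambda>n. \<not> c n"
  obtain m\<^sub>1 where m\<^sub>1: "even m\<^sub>1" "finite {n. c n \<and> \<not> q\<^sub>1 (hits c n) \<le> m\<^sub>1}"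
      "infinite {j. c (Suc j)} \<longrightarrow> infinite {n. c n \<and> q\<^sub>1 (hits c n) = m\<^sub>1}"
      "finite {j. c (Suc j)} \<longrightarrow> m\<^sub>1 = 0"
    using parity_acc_on_hits[of c q\<^sub>1, OF acc\<^sub>1] by blast
  obtain m\<^sub>2 where m\<^sub>2: "even m\<^sub>2" "finite {n. ?c' n \<and> \<not> q\<^sub>2 (hits ?c' n) \<le> m\<^sub>2}"
      "infinite {j. ?c' (Suc j)} \<longrightarrow> infinite {n. ?c' n \<and> q\<^sub>2 (hits ?c' n) = m\<^sub>2}"
      "finite {j. ?c' (Suc j)} \<longrightarrow> m\<^sub>2 = 0"
    using parity_acc_on_hits[of ?c' q\<^sub>2, OF acc\<^sub>2] by blast
  define m where "m = max m\<^sub>1 m\<^sub>2"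
  have "{n. \<not> g n \<le> m} \<subseteq>
      {n. c n \<and> \<not> q\<^sub>1 (hits c n) \<le> m\<^sub>1} \<union> {n. ?c' n \<and> \<not> q\<^sub>2 (hits ?c' n) \<le> m\<^sub>2}"
    using g by (auto simp: m_def)
  then have "finite {n. \<not> g n \<le> m}" using m\<^sub>1(2) m\<^sub>2(2) by (meson finite_Un finite_subset)
  moreover have "infinite {n. g n = m}"
  proof -
    have "infinite ({j. c (Suc j)} \<union> {j. ?c' (Suc j)})"
      by (simp add: Collect_disj_eq[symmetric])
    then have "m = m\<^sub>1 \<and> infinite {j. c (Suc j)} \<or> m = m\<^sub>2 \<and> infinite {j. ?c' (Suc j)}"
      using m\<^sub>1(4) m\<^sub>2(4) unfolding m_def by (cases "m\<^sub>1 \<le> m\<^sub>2") auto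
    then consider "m = m\<^sub>1" "infinite {j. c (Suc j)}" | "m = m\<^sub>2" "infinite {j. ?c' (Suc j)}"
      by blast
    then show ?thesis
    proof cases
      case 1
      then have "{n. c n \<and> q\<^sub>1 (hits c n) = m\<^sub>1} \<subseteq> {n. g n = m}" using g by auto
      then show ?thesis using m\<^sub>1(3) 1(2) finite_subset by blast
    next
      case 2
      then have "{n. ?c' n \<and> q\<^sub>2 (hits ?c' n) = m\<^sub>2} \<subseteq> {n. g n = m}" using g by auto
      then show ?thesis using m\<^sub>2(3) 2(2) finite_subset by blast
    qed
  qed
  moreover have "even m" using m\<^sub>1(1) m\<^sub>2(1) by (simp add: m_def max_def)
  ultimately show ?thesis unfolding parity_acc_iff by blast
qed

section \<open>Branches and admissible paths\<close>

lemma dir_set_singleton: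
  assumes "(D :: dir set) \<noteq> UNIV" and "d \<in> D"
  shows "D = {d}"
proof -
  have "L \<in> D \<Longrightarrow> R \<in> D \<Longrightarrow> D = UNIV" by (metis UNIV_eq_I dir.exhaust)
  then have "e = d" if "e \<in> D" for e
    using assms that by (cases d; cases e) auto
  then show ?thesis using assms(2) by blast
qed

lemma dir_singleton_ne_UNIV [simp]: "{d} \<noteq> (UNIV :: dir set)"
  by (cases d) (metis UNIV_I dir.distinct singletonD)+

lemma branch_prefix_0 [simp]: "branch_prefix \<pi> 0 = []"
  by (simp add: branch_prefix_def)

lemma branch_prefix_Suc: "branch_prefix \<pi> (Suc n) = branch_prefix \<pi> n @ [\<pi> n]"
  by (simp add: branch_prefix_def)

lemma length_branch_prefix [simp]: "length (branch_prefix \<pi> n) = n"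
  by (simp add: branch_prefix_def)

lemma nth_branch_prefix: "k < n \<Longrightarrow> branch_prefix \<pi> n ! k = \<pi> k"
  by (simp add: branch_prefix_def)

lemma take_branch_prefix: "k \<le> n \<Longrightarrow> take k (branch_prefix \<pi> n) = branch_prefix \<pi> k"
  by (simp add: branch_prefix_def take_map)

lemma branch_prefix_append:
  "branch_prefix (\<lambda>n. if n < length u then u ! n else \<pi> (n - length u)) (length u + k) =
     u @ branch_prefix \<pi> k"
  by (induction k) (auto simp: branch_prefix_Suc intro: nth_equalityI simp: nth_branch_prefix)

lemma growing_prefixes_branch:
  assumes "\<And>n. \<exists>ds. V (Suc n) = V n @ ds"
  obtains \<pi> where "\<And>n. V n = branch_prefix \<pi> (length (V n))"
proof -
  have extends: "\<exists>ds. V m = V n @ ds" if "n \<le> m" for n m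
    using that
  proof (induction m rule: dec_induct)
    case (step m)
    then show ?case using assms[of m] by (metis append.assoc)
  qed simp
  define \<pi> where "\<pi> k = V (SOME n. k < length (V n)) ! k" for k
  have "\<pi> k = V n ! k" if k: "k < length (V n)" for k n
  proof -
    define n' where "n' = (SOME n. k < length (V n))"
    have k': "k < length (V n')" unfolding n'_def using k by (rule someI)
    have "\<pi> k = V n' ! k" unfolding \<pi>_def n'_def ..
    also have "\<dots> = V n ! k"
      using extends[of n n'] extends[of n' n] k k' by (cases "n \<le> n'") (auto simp: nth_append)
    finally show ?thesis .
  qed
  then show ?thesis by (intro that[of \<pi>] nth_equalityI) (auto simp: nth_branch_prefix)
qed

definition admissible :: "('x \<Rightarrow> dir set) \<Rightarrow> (dir list \<Rightarrow> 'x) \<Rightarrow> dir list \<Rightarrow> bool" where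
  "admissible C w u \<longleftrightarrow> (\<forall>k < length u. u ! k \<in> C (w (take k u)))"

lemma admissible_Nil [simp]: "admissible C w []"
  by (simp add: admissible_def)

lemma admissible_snoc: "admissible C w (u @ [d]) \<longleftrightarrow> admissible C w u \<and> d \<in> C (w u)"
  unfolding admissible_def by (auto simp: nth_append less_Suc_eq)

lemma admissible_take: "admissible C w u \<Longrightarrow> admissible C w (take k u)"
  unfolding admissible_def by (simp add: min_def)

lemma admissible_append:
  "admissible C w (u @ v) \<longleftrightarrow> admissible C w u \<and> admissible C (\<lambda>v. w (u @ v)) v"
  by (induction v rule: rev_induct) (auto simp: admissible_snoc simp flip: append_assoc)

lemma admissible_branch_prefix:
  "admissible C w (branch_prefix \<pi> n) \<longleftrightarrow> (\<forall>k < n. \<pi> k \<in> C (w (branch_prefix \<pi> k)))"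
  unfolding admissible_def by (auto simp: nth_branch_prefix take_branch_prefix)

lemma admissible_UNIV [simp]: "admissible (\<lambda>_. UNIV) w u"
  by (simp add: admissible_def)

lemma admissible_mono:
  assumes "admissible C' w u" and "\<And>v. admissible C w v \<Longrightarrow> C' (w v) \<subseteq> C (w v)"
  shows "admissible C w u"
  using assms(1) by (induction u rule: rev_induct) (use assms(2) in \<open>auto simp: admissible_snoc\<close>)

lemma admissible_branch_of_prefixes:
  assumes "\<And>n. V n = branch_prefix \<pi> (length (V n))" and "\<And>n. admissible C w (V n)"
    and "\<And>k. \<exists>n. k < length (V n)"
  shows "\<pi> k \<in> C (w (branch_prefix \<pi> k))"
proof -
  obtain n where n: "k < length (V n)" using assms(3) by blast
  have "admissible C w (take (Suc k) (V n))" using assms(2) admissible_take by blast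
  also have "take (Suc k) (V n) = branch_prefix \<pi> (Suc k)"
    using assms(1)[of n] n by (metis Suc_leI take_branch_prefix)
  finally show ?thesis by (simp add: admissible_branch_prefix)
qed

section \<open>Merging two trees\<close>

(* The state (v1, v2, c) holds the current node of each tree, and c tells which one is
   followed. When leaving a node labelled x0 the direction decides: L continues in w1, R in w2. *)
fun merge_label :: "(dir list \<Rightarrow> 'x) \<Rightarrow> (dir list \<Rightarrow> 'x) \<Rightarrow> dir list \<times> dir list \<times> bool \<Rightarrow> 'x" where
  "merge_label w1 w2 (v1, v2, c) = (if c then w1 v1 else w2 v2)"

fun merge_step :: "(dir list \<Rightarrow> 'x) \<Rightarrow> (dir list \<Rightarrow> 'x) \<Rightarrow> 'x \<Rightarrow>
    dir list \<times> dir list \<times> bool \<Rightarrow> dir \<Rightarrow> dir list \<times> dir list \<times> bool" where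
  "merge_step w1 w2 x0 (v1, v2, c) d =
    (if (if merge_label w1 w2 (v1, v2, c) = x0 then d = L else c)
     then (v1 @ [d], v2, True) else (v1, v2 @ [d], False))"

definition merge_state :: "(dir list \<Rightarrow> 'x) \<Rightarrow> (dir list \<Rightarrow> 'x) \<Rightarrow> 'x \<Rightarrow> dir list \<Rightarrow>
    dir list \<times> dir list \<times> bool" where
  "merge_state w1 w2 x0 u = foldl (merge_step w1 w2 x0) ([], [], True) u"

definition merge :: "(dir list \<Rightarrow> 'x) \<Rightarrow> (dir list \<Rightarrow> 'x) \<Rightarrow> 'x \<Rightarrow> dir list \<Rightarrow> 'x" where
  "merge w1 w2 x0 u = merge_label w1 w2 (merge_state w1 w2 x0 u)"

lemma merge_state_Nil [simp]: "merge_state w1 w2 x0 [] = ([], [], True)"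
  by (simp add: merge_state_def)

lemma merge_state_snoc:
  "merge_state w1 w2 x0 (u @ [d]) = merge_step w1 w2 x0 (merge_state w1 w2 x0 u) d"
  by (simp add: merge_state_def)

(* The tree that is not being followed waits at a node labelled x0, so that switching to it
   at the next x0-node continues a consistent path. *)
lemma merge_invariant:
  assumes "admissible C (merge w1 w2 x0) u" and "w2 [] = x0"
    and "merge_state w1 w2 x0 u = (v1, v2, c)"
  shows "admissible (C(x0 := {L})) w1 v1" "admissible (C(x0 := {R})) w2 v2"
    "c \<Longrightarrow> w2 v2 = x0" "\<not> c \<Longrightarrow> w1 v1 = x0"
proof -
  have "admissible (C(x0 := {L})) w1 v1 \<and> admissible (C(x0 := {R})) w2 v2 \<and>
      (c \<longrightarrow> w2 v2 = x0) \<and> (\<not> c \<longrightarrow> w1 v1 = x0)"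
    using assms(1,3)
  proof (induction u arbitrary: v1 v2 c rule: rev_induct)
    case Nil
    then show ?case using assms(2) by simp
  next
    case (snoc d u)
    obtain v1' v2' c' where S: "merge_state w1 w2 x0 u = (v1', v2', c')"
      by (cases "merge_state w1 w2 x0 u") auto
    have adm: "admissible C (merge w1 w2 x0) u" and "d \<in> C (merge w1 w2 x0 u)"
      using snoc.prems(1) by (simp_all add: admissible_snoc)
    then have d: "d \<in> C (merge_label w1 w2 (v1', v2', c'))"
      using S by (simp add: merge_def)
    from snoc.IH[OF adm S] have "admissible (C(x0 := {L})) w1 v1'" "admissible (C(x0 := {R})) w2 v2'"
        "c' \<longrightarrow> w2 v2' = x0" "\<not> c' \<longrightarrow> w1 v1' = x0"
      by blast+
    then show ?case using d snoc.prems(2) unfolding merge_state_snoc S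
      by (cases c'; cases "w1 v1' = x0"; cases "w2 v2' = x0"; cases d) (auto simp: admissible_snoc fun_upd_def)
  qed
  then show "admissible (C(x0 := {L})) w1 v1" "admissible (C(x0 := {R})) w2 v2"
    "c \<Longrightarrow> w2 v2 = x0" "\<not> c \<Longrightarrow> w1 v1 = x0"
    by blast+
qed

lemma merge_branch:
  assumes branch: "\<And>n. \<pi> n \<in> C (merge w1 w2 x0 (branch_prefix \<pi> n))" and root: "w2 [] = x0"
  obtains c \<pi>1 \<pi>2 where
    "\<And>n. merge w1 w2 x0 (branch_prefix \<pi> n) =
       (if c n then w1 (branch_prefix \<pi>1 (hits c n)) else w2 (branch_prefix \<pi>2 (hits (\<lambda>n. \<not> c n) n)))"
    and "\<And>k. infinite {j. c (Suc j)} \<Longrightarrow> \<pi>1 k \<in> (C(x0 := {L})) (w1 (branch_prefix \<pi>1 k))"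
    and "\<And>k. infinite {j. \<not> c (Suc j)} \<Longrightarrow> \<pi>2 k \<in> (C(x0 := {R})) (w2 (branch_prefix \<pi>2 k))"
proof -
  define S where "S n = merge_state w1 w2 x0 (branch_prefix \<pi> n)" for n
  define V1 where "V1 n = fst (S n)" for n
  define V2 where "V2 n = fst (snd (S n))" for n
  define c where "c n = snd (snd (S n))" for n
  have S: "merge_state w1 w2 x0 (branch_prefix \<pi> n) = (V1 n, V2 n, c n)" for n
    by (simp add: S_def V1_def V2_def c_def)
  have adm: "admissible C (merge w1 w2 x0) (branch_prefix \<pi> n)" for n
    using branch by (simp add: admissible_branch_prefix)
  note inv = merge_invariant[OF adm root S]
  have step: "V1 (Suc n) = (if c (Suc n) then V1 n @ [\<pi> n] else V1 n) \<and>
      V2 (Suc n) = (if c (Suc n) then V2 n else V2 n @ [\<pi> n])" for n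
    using S[of "Suc n"] by (auto simp: branch_prefix_Suc merge_state_snoc S split: if_splits)
  have length_V1: "length (V1 n) = hits c n" and length_V2: "length (V2 n) = hits (\<lambda>n. \<not> c n) n"
    for n using S[of 0] by (induction n) (auto simp: hits_Suc step)
  obtain \<pi>1 where \<pi>1: "\<And>n. V1 n = branch_prefix \<pi>1 (length (V1 n))"
    using growing_prefixes_branch[of V1] step by (metis append_Nil2)
  obtain \<pi>2 where \<pi>2: "\<And>n. V2 n = branch_prefix \<pi>2 (length (V2 n))"
    using growing_prefixes_branch[of V2] step by (metis append_Nil2)
  show ?thesis
  proof
    show "merge w1 w2 x0 (branch_prefix \<pi> n) =
       (if c n then w1 (branch_prefix \<pi>1 (hits c n)) else w2 (branch_prefix \<pi>2 (hits (\<lambda>n. \<not> c n) n)))"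
      for n using \<pi>1[of n] \<pi>2[of n] by (simp add: merge_def S length_V1 length_V2)
  next
    fix k assume "infinite {j. c (Suc j)}"
    then have "\<exists>n. k < length (V1 n)" for k
      using hits_unbounded[of c "Suc k"] by (simp add: length_V1 Suc_le_eq)
    then show "\<pi>1 k \<in> (C(x0 := {L})) (w1 (branch_prefix \<pi>1 k))"
      using admissible_branch_of_prefixes[of V1 \<pi>1 "C(x0 := {L})" w1] \<pi>1 inv(1) by blast
  next
    fix k assume "infinite {j. \<not> c (Suc j)}"
    then have "\<exists>n. k < length (V2 n)" for k
      using hits_unbounded[of "\<lambda>n. \<not> c n" "Suc k"] by (simp add: length_V2 Suc_le_eq)
    then show "\<pi>2 k \<in> (C(x0 := {R})) (w2 (branch_prefix \<pi>2 k))"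
      using admissible_branch_of_prefixes[of V2 \<pi>2 "C(x0 := {R})" w2] \<pi>2 inv(2) by blast
  qed
qed

section \<open>Winning trees in the disjointness game\<close>

lemma finite_delta: "is_npta \<Sigma> M \<Longrightarrow> finite (delta M)"
  unfolding is_npta_def
  by (auto intro: rev_finite_subset[of "states M \<times> \<Sigma> \<times> states M \<times> states M"])

lemma lang_from_of_transition_tree:
  assumes "\<And>u. \<tau> u \<in> delta M" and "\<And>u. tr_letter (\<tau> u) \<in> \<Sigma>"
    and "\<And>u d. tr_src (\<tau> (u @ [d])) = tr_succ (\<tau> u) d"
    and "\<And>\<pi>. trans_seq_acc M (\<lambda>n. \<tau> (branch_prefix \<pi> n))"
  shows "(\<lambda>u. tr_letter (\<tau> u)) \<in> lang_from \<Sigma> M (tr_src (\<tau> []))"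
proof -
  have "(tr_src (\<tau> u), tr_letter (\<tau> u), tr_src (\<tau> (u @ [L])), tr_src (\<tau> (u @ [R]))) = \<tau> u" for u
    using assms(3)[of u L] assms(3)[of u R] by (simp add: tr_src_def tr_letter_def tr_succ_def)
  then have "is_run M (tr_src (\<tau> [])) (\<lambda>u. tr_letter (\<tau> u)) (\<lambda>u. tr_src (\<tau> u))"
    using assms(1) unfolding is_run_def by simp
  moreover have "accepting_run M (\<lambda>u. tr_src (\<tau> u))"
    using assms(4) unfolding accepting_run_def trans_seq_acc_def by simp
  ultimately show ?thesis using assms(2) unfolding lang_from_def by blast
qed

type_synonym ('p,'q,'a) joint_trans = "('p,'a) trans \<times> ('q,'a) trans"

locale disjointness_game =
  fixes \<Sigma> :: "'a set" and A :: "('p,'a) npta" and B :: "('q,'a) npta"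
begin

definition joint_move :: "('p,'q,'a) joint_trans \<Rightarrow> bool" where
  "joint_move x \<longleftrightarrow> fst x \<in> delta A \<and> snd x \<in> delta B \<and>
     tr_letter (fst x) \<in> \<Sigma> \<and> tr_letter (fst x) = tr_letter (snd x)"

definition sources :: "('p,'q,'a) joint_trans \<Rightarrow> 'p \<times> 'q" where
  "sources x = (tr_src (fst x), tr_src (snd x))"

definition successors :: "('p,'q,'a) joint_trans \<Rightarrow> dir \<Rightarrow> 'p \<times> 'q" where
  "successors x d = (tr_succ (fst x) d, tr_succ (snd x) d)"

definition both_accepting :: "(nat \<Rightarrow> ('p,'q,'a) joint_trans) \<Rightarrow> bool" where
  "both_accepting xs \<longleftrightarrow> trans_seq_acc A (fst \<circ> xs) \<and> trans_seq_acc B (snd \<circ> xs)"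

(* A tree of joint moves by which Automaton wins against every Pathfinder that leaves a move x
   in a direction from C x; outside the C-admissible paths the tree is irrelevant. *)
definition winning_tree ::
    "(('p,'q,'a) joint_trans \<Rightarrow> dir set) \<Rightarrow> (dir list \<Rightarrow> ('p,'q,'a) joint_trans) \<Rightarrow> bool" where
  "winning_tree C w \<longleftrightarrow>
     (\<forall>u. admissible C w u \<longrightarrow>
        joint_move (w u) \<and> (\<forall>d \<in> C (w u). sources (w (u @ [d])) = successors (w u) d)) \<and>
     (\<forall>\<pi>. (\<forall>n. \<pi> n \<in> C (w (branch_prefix \<pi> n))) \<longrightarrow> both_accepting (\<lambda>n. w (branch_prefix \<pi> n)))"

definition wins_from :: "(('p,'q,'a) joint_trans \<Rightarrow> dir set) \<Rightarrow> 'p \<times> 'q \<Rightarrow> bool" where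
  "wins_from C s \<longleftrightarrow> (\<exists>w. winning_tree C w \<and> sources (w []) = s)"

definition has_positional_refinement :: "(('p,'q,'a) joint_trans \<Rightarrow> dir set) \<Rightarrow> bool" where
  "has_positional_refinement C \<longleftrightarrow>
     (\<exists>P. (\<forall>x. P x \<in> C x) \<and> (\<forall>s. wins_from (\<lambda>x. {P x}) s \<longrightarrow> wins_from C s))"

lemma both_accepting_shift:
  "both_accepting xs \<Longrightarrow> both_accepting (\<lambda>n. xs (n + k))"
  unfolding both_accepting_def trans_seq_acc_def
  by (auto dest: parity_acc_shift[where k = k])

lemma both_accepting_interleave:
  assumes "\<And>n. xs n = (if c n then ys (hits c n) else zs (hits (\<lambda>n. \<not> c n) n))"
    and "infinite {j. c (Suc j)} \<Longrightarrow> both_accepting ys"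
    and "infinite {j. \<not> c (Suc j)} \<Longrightarrow> both_accepting zs"
  shows "both_accepting xs"
proof -
  have "parity_acc (\<lambda>n. pri M (tr_src (f (xs n))))"
    if "infinite {j. c (Suc j)} \<Longrightarrow> parity_acc (\<lambda>k. pri M (tr_src (f (ys k))))"
      and "infinite {j. \<not> c (Suc j)} \<Longrightarrow> parity_acc (\<lambda>k. pri M (tr_src (f (zs k))))"
    for M :: "('x,'a) npta" and f :: "('p,'q,'a) joint_trans \<Rightarrow> ('x,'a) trans"
    by (rule parity_acc_interleave[OF _ that]) (auto simp: assms(1))
  from this[of A fst] this[of B snd] show ?thesis
    using assms(2,3) unfolding both_accepting_def trans_seq_acc_def comp_def by blast
qed

lemma winning_tree_antimono:
  assumes w: "winning_tree C w" and sub: "\<And>u. admissible C w u \<Longrightarrow> C' (w u) \<subseteq> C (w u)"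
  shows "winning_tree C' w"
proof -
  have adm: "admissible C w u" if "admissible C' w u" for u
    using that sub by (rule admissible_mono)
  have "\<pi> n \<in> C (w (branch_prefix \<pi> n))" if "\<forall>n. \<pi> n \<in> C' (w (branch_prefix \<pi> n))" for \<pi> n
  proof -
    have "admissible C' w (branch_prefix \<pi> (Suc n))"
      using that by (simp add: admissible_branch_prefix)
    then have "admissible C w (branch_prefix \<pi> (Suc n))" by (rule adm)
    then show ?thesis by (simp add: admissible_branch_prefix)
  qed
  then show ?thesis
    using w adm sub unfolding winning_tree_def by blast
qed

lemma winning_tree_subtree:
  assumes w: "winning_tree C w" and u: "admissible C w u"
  shows "winning_tree C (\<lambda>v. w (u @ v))"
  unfolding winning_tree_def
proof (rule conjI; intro allI impI)
  fix v assume "admissible C (\<lambda>v. w (u @ v)) v"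
  then have "admissible C w (u @ v)" using u admissible_append by blast
  then show "joint_move (w (u @ v)) \<and>
      (\<forall>d \<in> C (w (u @ v)). sources (w (u @ v @ [d])) = successors (w (u @ v)) d)"
    using w unfolding winning_tree_def by (metis append.assoc)
next
  fix \<pi>' assume \<pi>': "\<forall>n. \<pi>' n \<in> C (w (u @ branch_prefix \<pi>' n))"
  define \<pi> where "\<pi> n = (if n < length u then u ! n else \<pi>' (n - length u))" for n
  have prefix: "branch_prefix \<pi> (length u + k) = u @ branch_prefix \<pi>' k" for k
    unfolding \<pi>_def by (rule branch_prefix_append)
  have "\<pi> n \<in> C (w (branch_prefix \<pi> n))" for n
  proof (cases "n < length u")
    case True
    then have "branch_prefix \<pi> n = take n u"
      using prefix[of 0] take_branch_prefix[of n "length u" \<pi>] by simp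
    then show ?thesis using u True unfolding admissible_def by (simp add: \<pi>_def)
  next
    case False
    then obtain k where "n = length u + k" by (metis le_add_diff_inverse not_less)
    then show ?thesis using \<pi>' prefix by (simp add: \<pi>_def)
  qed
  then have "both_accepting (\<lambda>n. w (branch_prefix \<pi> (n + length u)))"
    using w both_accepting_shift unfolding winning_tree_def by blast
  then show "both_accepting (\<lambda>n. w (u @ branch_prefix \<pi>' n))"
    using prefix by (simp add: add.commute)
qed

lemma winning_tree_merge:
  assumes w1: "winning_tree (C(x0 := {L})) w1" and w2: "winning_tree (C(x0 := {R})) w2"
    and root: "w2 [] = x0"
  shows "winning_tree C (merge w1 w2 x0)"
  unfolding winning_tree_def
proof (rule conjI; intro allI impI conjI ballI)
  fix u assume u: "admissible C (merge w1 w2 x0) u"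
  obtain v1 v2 c where S: "merge_state w1 w2 x0 u = (v1, v2, c)"
    by (cases "merge_state w1 w2 x0 u") auto
  note inv = merge_invariant[OF u root S]
  have l1: "joint_move (w1 v1)"
    "\<And>d. d \<in> (C(x0 := {L})) (w1 v1) \<Longrightarrow> sources (w1 (v1 @ [d])) = successors (w1 v1) d"
    using w1 inv(1) unfolding winning_tree_def by blast+
  have l2: "joint_move (w2 v2)"
    "\<And>d. d \<in> (C(x0 := {R})) (w2 v2) \<Longrightarrow> sources (w2 (v2 @ [d])) = successors (w2 v2) d"
    using w2 inv(2) unfolding winning_tree_def by blast+
  show "joint_move (merge w1 w2 x0 u)"
    using l1(1) l2(1) S by (cases c) (simp_all add: merge_def)
  fix d assume "d \<in> C (merge w1 w2 x0 u)"
  then show "sources (merge w1 w2 x0 (u @ [d])) = successors (merge w1 w2 x0 u) d"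
    using l1(2) l2(2) inv(3,4) S
    by (cases c; cases "w1 v1 = x0"; cases "w2 v2 = x0"; cases d)
      (simp_all add: merge_def merge_state_snoc)
next
  fix \<pi> assume "\<forall>n. \<pi> n \<in> C (merge w1 w2 x0 (branch_prefix \<pi> n))"
  then have "\<And>n. \<pi> n \<in> C (merge w1 w2 x0 (branch_prefix \<pi> n))" by blast
  then obtain c \<pi>1 \<pi>2 where labels:
    "\<And>n. merge w1 w2 x0 (branch_prefix \<pi> n) =
       (if c n then w1 (branch_prefix \<pi>1 (hits c n)) else w2 (branch_prefix \<pi>2 (hits (\<lambda>n. \<not> c n) n)))"
    and \<pi>1: "\<And>k. infinite {j. c (Suc j)} \<Longrightarrow> \<pi>1 k \<in> (C(x0 := {L})) (w1 (branch_prefix \<pi>1 k))"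
    and \<pi>2: "\<And>k. infinite {j. \<not> c (Suc j)} \<Longrightarrow> \<pi>2 k \<in> (C(x0 := {R})) (w2 (branch_prefix \<pi>2 k))"
    by (rule merge_branch[of \<pi> C w1 w2 x0, OF _ root]) (rule that)
  show "both_accepting (\<lambda>n. merge w1 w2 x0 (branch_prefix \<pi> n))"
  proof (rule both_accepting_interleave[where ys = "\<lambda>k. w1 (branch_prefix \<pi>1 k)"
        and zs = "\<lambda>k. w2 (branch_prefix \<pi>2 k)", OF labels])
    show "both_accepting (\<lambda>k. w1 (branch_prefix \<pi>1 k))" if "infinite {j. c (Suc j)}"
      using w1 \<pi>1[OF that] unfolding winning_tree_def by blast
    show "both_accepting (\<lambda>k. w2 (branch_prefix \<pi>2 k))" if "infinite {j. \<not> c (Suc j)}"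
      using w2 \<pi>2[OF that] unfolding winning_tree_def by blast
  qed
qed

section \<open>Positional refinement\<close>

lemma has_positional_refinement_of_no_choice:
  assumes "\<forall>x. C x \<noteq> {}" and "\<forall>x. joint_move x \<longrightarrow> C x \<noteq> UNIV"
  shows "has_positional_refinement C"
proof -
  define P where "P x = (SOME d. d \<in> C x)" for x
  have P: "P x \<in> C x" for x
    unfolding P_def using assms(1) by (metis some_in_eq)
  have "winning_tree C w" if w: "winning_tree (\<lambda>x. {P x}) w" for w
  proof (rule winning_tree_antimono[OF w])
    fix u assume "admissible (\<lambda>x. {P x}) w u"
    then have "joint_move (w u)" using w unfolding winning_tree_def by blast
    then show "C (w u) \<subseteq> {P (w u)}" using assms(2) P dir_set_singleton by blast
  qed
  then show ?thesis unfolding has_positional_refinement_def wins_from_def using P by blast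
qed

lemma has_positional_refinement_if_right_reaches:
  assumes "C x0 = UNIV" and "has_positional_refinement (C(x0 := {L}))"
    and w2: "winning_tree (C(x0 := {R})) w2" and root: "w2 [] = x0"
  shows "has_positional_refinement C"
proof -
  obtain P where P: "\<And>x. P x \<in> (C(x0 := {L})) x"
    and wins: "\<And>s. wins_from (\<lambda>x. {P x}) s \<Longrightarrow> wins_from (C(x0 := {L})) s"
    using assms(2) unfolding has_positional_refinement_def by blast
  have "wins_from C s" if s: "wins_from (\<lambda>x. {P x}) s" for s
  proof -
    obtain w1 where w1: "winning_tree (C(x0 := {L})) w1" "sources (w1 []) = s"
      using wins[OF s] unfolding wins_from_def by blast
    have "merge w1 w2 x0 [] = w1 []" by (simp add: merge_def)
    then show ?thesis
      using winning_tree_merge[OF w1(1) w2 root] w1(2) unfolding wins_from_def by metis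
  qed
  moreover have "P x \<in> C x" for x using P[of x] assms(1) by (cases "x = x0") auto
  ultimately show ?thesis unfolding has_positional_refinement_def by blast
qed

lemma has_positional_refinement_if_right_avoids:
  assumes "C x0 = UNIV" and "has_positional_refinement (C(x0 := {R}))"
    and avoid: "\<And>w. winning_tree (C(x0 := {R})) w \<Longrightarrow> w [] \<noteq> x0"
  shows "has_positional_refinement C"
proof -
  obtain P where P: "\<And>x. P x \<in> (C(x0 := {R})) x"
    and wins: "\<And>s. wins_from (\<lambda>x. {P x}) s \<Longrightarrow> wins_from (C(x0 := {R})) s"
    using assms(2) unfolding has_positional_refinement_def by blast
  have "winning_tree C w" if w: "winning_tree (C(x0 := {R})) w" for w
  proof (rule winning_tree_antimono[OF w])
    fix u assume "admissible (C(x0 := {R})) w u"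
    then have "w u \<noteq> x0" using avoid[OF winning_tree_subtree[OF w]] by simp
    then show "C (w u) \<subseteq> (C(x0 := {R})) (w u)" by simp
  qed
  then have "wins_from C s" if "wins_from (\<lambda>x. {P x}) s" for s
    using wins[OF that] unfolding wins_from_def by blast
  moreover have "P x \<in> C x" for x using P[of x] assms(1) by (cases "x = x0") auto
  ultimately show ?thesis unfolding has_positional_refinement_def by blast
qed

lemma has_positional_refinement_if_finite:
  assumes fin: "finite {x. joint_move x}" and "\<forall>x. C x \<noteq> {}"
  shows "has_positional_refinement C"
proof -
  have "has_positional_refinement C"
    if "card {x. joint_move x \<and> C x = UNIV} = n" and "\<forall>x. C x \<noteq> {}" for n C
    using that
  proof (induction n arbitrary: C)
    case 0
    have "finite {x. joint_move x \<and> C x = UNIV}" using fin by (rule rev_finite_subset) blast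
    with "0.prems"(1) have "\<forall>x. joint_move x \<longrightarrow> C x \<noteq> UNIV" by auto
    with "0.prems"(2) show ?case by (rule has_positional_refinement_of_no_choice)
  next
    case (Suc n)
    let ?X = "{x. joint_move x \<and> C x = UNIV}"
    have "finite ?X" using fin by (rule rev_finite_subset) blast
    have "?X \<noteq> {}" using Suc.prems(1) by (metis card.empty nat.distinct(1))
    then obtain x0 where x0: "joint_move x0" "C x0 = UNIV" by blast
    have "{x. joint_move x \<and> (C(x0 := {d})) x = UNIV} = ?X - {x0}" for d :: dir
      using x0 by auto
    then have "card {x. joint_move x \<and> (C(x0 := {d})) x = UNIV} = n" for d
      using Suc.prems(1) x0 \<open>finite ?X\<close> by simp
    then have refinements: "has_positional_refinement (C(x0 := {d}))" for d
      using Suc.IH Suc.prems(2) by simp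
    show ?case
    proof (cases "\<exists>w2. winning_tree (C(x0 := {R})) w2 \<and> w2 [] = x0")
      case True
      then show ?thesis
        using has_positional_refinement_if_right_reaches x0(2) refinements by blast
    next
      case False
      then show ?thesis
        using has_positional_refinement_if_right_avoids x0(2) refinements by blast
    qed
  qed
  then show ?thesis using assms(2) by blast
qed

lemma finite_joint_moves:
  assumes "finite (delta A)" and "finite (delta B)"
  shows "finite {x. joint_move x}"
  using finite_cartesian_product[OF assms] by (rule rev_finite_subset) (auto simp: joint_move_def)

lemma wins_from_play:
  assumes "is_play \<Sigma> A B dA dB d" and "\<forall>i. d i = P (dA i, dB i)"
    and "automaton_wins A B dA dB"
  shows "wins_from (\<lambda>x. {P x}) (init A, init B)"
proof -
  define w where "w u = (dA (length u), dB (length u))" for u :: "dir list"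
  have "joint_move (dA i, dB i)" for i
    using assms(1) unfolding is_play_def joint_move_def fst_conv snd_conv by blast
  moreover have "sources (dA (Suc i), dB (Suc i)) = successors (dA i, dB i) (P (dA i, dB i))" for i
    using assms(1,2) unfolding is_play_def sources_def successors_def by simp
  moreover have "both_accepting (\<lambda>i. (dA i, dB i))"
    using assms(3) unfolding automaton_wins_def both_accepting_def comp_def by simp
  ultimately have "winning_tree (\<lambda>x. {P x}) w"
    unfolding winning_tree_def w_def by simp
  moreover have "sources (w []) = (init A, init B)"
    using assms(1) unfolding is_play_def sources_def w_def by simp
  ultimately show ?thesis unfolding wins_from_def by blast
qed

lemma lang_inter_nonempty_if_wins_unrestricted:
  assumes "wins_from (\<lambda>_. UNIV) (init A, init B)"
  shows "lang \<Sigma> A \<inter> lang \<Sigma> B \<noteq> {}"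
proof -
  obtain w where w: "winning_tree (\<lambda>_. UNIV) w" and root: "sources (w []) = (init A, init B)"
    using assms unfolding wins_from_def by blast
  have move: "joint_move (w u)" and succ: "sources (w (u @ [d])) = successors (w u) d" for u d
    using w unfolding winning_tree_def by auto
  have acc: "both_accepting (\<lambda>n. w (branch_prefix \<pi> n))" for \<pi>
    using w unfolding winning_tree_def by blast
  have letter: "tr_letter (fst (w u)) \<in> \<Sigma>"
    and same_letter: "tr_letter (snd (w u)) = tr_letter (fst (w u))" for u
    using move[of u] unfolding joint_move_def by auto
  have "(\<lambda>u. tr_letter (fst (w u))) \<in> lang \<Sigma> A"
  proof -
    have "(\<lambda>u. tr_letter (fst (w u))) \<in> lang_from \<Sigma> A (tr_src (fst (w [])))"
      by (rule lang_from_of_transition_tree)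
        (use move succ acc letter in \<open>auto simp: joint_move_def sources_def successors_def
          both_accepting_def comp_def\<close>)
    then show ?thesis using root by (simp add: lang_def sources_def)
  qed
  moreover have "(\<lambda>u. tr_letter (snd (w u))) \<in> lang \<Sigma> B"
  proof -
    have "(\<lambda>u. tr_letter (snd (w u))) \<in> lang_from \<Sigma> B (tr_src (snd (w [])))"
      by (rule lang_from_of_transition_tree)
        (use move succ acc letter same_letter in \<open>auto simp: joint_move_def sources_def
          successors_def both_accepting_def comp_def\<close>)
    then show ?thesis using root by (simp add: lang_def sources_def)
  qed
  ultimately show ?thesis by (auto simp: same_letter)
qed

end

theorem mainTheorem3:
  fixes \<Sigma> :: "'a set" and A :: "('p,'a) npta" and B :: "('q,'a) npta"
  assumes "is_npta \<Sigma> A" and "is_npta \<Sigma> B"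
    and "productive \<Sigma> A" and "productive \<Sigma> B"
    and "lang \<Sigma> A \<inter> lang \<Sigma> B = {}"
  shows "\<exists>P :: ('p,'a) trans \<times> ('q,'a) trans \<Rightarrow> dir.
           \<forall>dA dB d. is_play \<Sigma> A B dA dB d \<and> (\<forall>i. d i = P (dA i, dB i))
                     \<longrightarrow> \<not> automaton_wins A B dA dB"
proof -
  interpret disjointness_game \<Sigma> A B .
  have "finite {x. joint_move x}"
    using finite_joint_moves[OF finite_delta[OF assms(1)] finite_delta[OF assms(2)]] .
  then obtain P where P: "\<And>s. wins_from (\<lambda>x. {P x}) s \<Longrightarrow> wins_from (\<lambda>_. UNIV) s"
    using has_positional_refinement_if_finite[of "\<lambda>_. UNIV"]
    unfolding has_positional_refinement_def by auto
  show ?thesis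
  proof (intro exI[of _ P] allI impI notI)
    fix dA dB d
    assume "is_play \<Sigma> A B dA dB d \<and> (\<forall>i. d i = P (dA i, dB i))" and "automaton_wins A B dA dB"
    then have "wins_from (\<lambda>_. UNIV) (init A, init B)" using P wins_from_play by blast
    then show False using lang_inter_nonempty_if_wins_unrestricted assms(5) by blast
  qed
qed

end
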